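(* Let $\mathcal{A}$ be a unital algebra generated by two unital subalgebras $\mathcal{A}_1,\mathcal{A}_2$. Let $\mathcal{I}_1$ (resp. $\mathcal{I}_2$) be an ideal of $\mathcal{A}_1$ (resp. $\mathcal{A}_2$) and $\mathcal{I}$ the ideal of $\mathcal{A}$ generated by $\mathcal{I}_1\cup \mathcal{I}_2$. Let $\tau: \mathcal{A}\to \mathbb{C}$ be a unital linear functional with $\mathcal{I}\subset \ker(\tau)$ and $\tau': \mathcal{I}\to \mathbb{C}$ a linear functional such that $(\mathcal{A}_1,\mathcal{I}_1)$ and $(\mathcal{A}_2,\mathcal{I}_2)$ are free of type $B$ in $(\mathcal{A},\tau,\mathcal{I},\tau')$. Let $p\in \mathcal{I}_1$ with $\tau'(p)\neq 0$ and define $\varphi:\mathcal{A}\to \mathbb{C}$ by $\varphi(a)=\frac{1}{\tau'(p)}\tau'(p a)$. Then $\varphi$ coincides with $\tau$ on $\mathcal{A}_2$, and $\mathcal{A}_1,\mathcal{A}_2$ are conditionally free with respect to $(\tau,\varphi)$.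
   Context: Freeness of type $B$ in $(\mathcal{A},\tau,\mathcal{I},\tau')$ for $(\mathcal{A}_1,\mathcal{I}_1)$, $(\mathcal{A}_2,\mathcal{I}_2)$: $\mathcal{A}_1,\mathcal{A}_2$ are free w.r.t. $\tau$, and whenever $a_n\in\mathcal{A}_{i_n},\dots,a_1\in\mathcal{A}_{i_1}$, $v\in\mathcal{I}_h$, $b_1\in\mathcal{A}_{j_1},\dots,b_m\in\mathcal{A}_{j_m}$ with any two consecutive indices in $i_n,\dots,i_1,h,j_1,\dots,j_m$ different and all $a_r,b_s$ centered for $\tau$, $\tau'(a_n\cdots a_1vb_1\cdots b_m)=\tau(a_nb_m)\cdots\tau(a_1b_1)\tau'(v)$ if $n=m$ and $i_r=j_r$ for all $r$, and $=0$ otherwise. Conditional freeness w.r.t. $(\tau,\varphi)$: whenever $n>1$, $a_j\in\mathcal{A}_{i_j}$ with consecutive indices different and $\tau(a_j)=0$ for all $j$, $\tau(a_1\cdots a_n)=0$ and $\varphi(a_1\cdots a_n)=\varphi(a_1)\cdots\varphi(a_n)$. *)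

theory Defs
  imports Complex_Main
begin

class cplx_alg_1 = ring_1 +
  fixes cscale :: "complex \<Rightarrow> 'a \<Rightarrow> 'a" (infixr "*\<^sub>C" 75)
  assumes cscale_add_right: "c *\<^sub>C (x + y) = c *\<^sub>C x + c *\<^sub>C y"
    and cscale_add_left: "(b + c) *\<^sub>C x = b *\<^sub>C x + c *\<^sub>C x"
    and cscale_cscale: "b *\<^sub>C (c *\<^sub>C x) = (b * c) *\<^sub>C x"
    and cscale_one: "1 *\<^sub>C x = x"
    and mult_cscale_left: "(c *\<^sub>C x) * y = c *\<^sub>C (x * y)"
    and mult_cscale_right: "x * (c *\<^sub>C y) = c *\<^sub>C (x * y)"

definition csubspace :: "'a::cplx_alg_1 set \<Rightarrow> bool" where
  "csubspace S \<longleftrightarrow> 0 \<in> S \<and> (\<forall>x\<in>S. \<forall>y\<in>S. x + y \<in> S) \<and> (\<forall>c. \<forall>x\<in>S. c *\<^sub>C x \<in> S)"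

definition unital_subalg :: "'a::cplx_alg_1 set \<Rightarrow> bool" where
  "unital_subalg B \<longleftrightarrow> csubspace B \<and> 1 \<in> B \<and> (\<forall>x\<in>B. \<forall>y\<in>B. x * y \<in> B)"

definition alg_generated :: "'a::cplx_alg_1 set \<Rightarrow> 'a set" where
  "alg_generated S = \<Inter>{B. unital_subalg B \<and> S \<subseteq> B}"

definition ideal_of :: "'a::cplx_alg_1 set \<Rightarrow> 'a set \<Rightarrow> bool" where
  "ideal_of I B \<longleftrightarrow> I \<subseteq> B \<and> csubspace I \<and> (\<forall>x\<in>I. \<forall>b\<in>B. b * x \<in> I \<and> x * b \<in> I)"

definition ideal_generated :: "'a::cplx_alg_1 set \<Rightarrow> 'a set" where
  "ideal_generated S = \<Inter>{J. ideal_of J UNIV \<and> S \<subseteq> J}"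

definition clinear_on :: "'a::cplx_alg_1 set \<Rightarrow> ('a \<Rightarrow> complex) \<Rightarrow> bool" where
  "clinear_on S f \<longleftrightarrow> (\<forall>x\<in>S. \<forall>y\<in>S. f (x + y) = f x + f y) \<and> (\<forall>c. \<forall>x\<in>S. f (c *\<^sub>C x) = c * f x)"

definition fam :: "'b \<Rightarrow> 'b \<Rightarrow> nat \<Rightarrow> 'b" where
  "fam X1 X2 i = (if i = 1 then X1 else X2)"

definition alternating :: "nat list \<Rightarrow> bool" where
  "alternating is \<longleftrightarrow> (\<forall>k. Suc k < length is \<longrightarrow> is ! k \<noteq> is ! Suc k)"

definition free_wrt :: "('a::cplx_alg_1 \<Rightarrow> complex) \<Rightarrow> 'a set \<Rightarrow> 'a set \<Rightarrow> bool" where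
  "free_wrt \<tau> A1 A2 \<longleftrightarrow>
    (\<forall>as is. length as = length is \<and> length as \<ge> 1 \<and> set is \<subseteq> {1, 2} \<and> alternating is
       \<and> (\<forall>j < length as. as ! j \<in> fam A1 A2 (is ! j) \<and> \<tau> (as ! j) = 0)
       \<longrightarrow> \<tau> (prod_list as) = 0)"

text \<open>The list as = [a_1,...,a_n]
  with indices is = [i_1,...,i_n], so the product a_n ... a_1 is prod_list (rev as) and the index
  sequence i_n,...,i_1,h,j_1,...,j_m is rev is @ [h] @ js.\<close>
definition free_type_B ::
  "('a::cplx_alg_1 \<Rightarrow> complex) \<Rightarrow> 'a set \<Rightarrow> ('a \<Rightarrow> complex) \<Rightarrow> 'a set \<Rightarrow> 'a set \<Rightarrow> 'a set \<Rightarrow> 'a set \<Rightarrow> bool"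
  where
  "free_type_B \<tau> I \<tau>' A1 I1 A2 I2 \<longleftrightarrow> free_wrt \<tau> A1 A2 \<and>
    (\<forall>as is v h bs js.
       length as = length is \<and> length bs = length js \<and> set is \<subseteq> {1, 2} \<and> set js \<subseteq> {1, 2}
       \<and> h \<in> {1, 2} \<and> v \<in> fam I1 I2 h
       \<and> (\<forall>r < length as. as ! r \<in> fam A1 A2 (is ! r) \<and> \<tau> (as ! r) = 0)
       \<and> (\<forall>s < length bs. bs ! s \<in> fam A1 A2 (js ! s) \<and> \<tau> (bs ! s) = 0)
       \<and> alternating (rev is @ [h] @ js)
       \<longrightarrow> \<tau>' (prod_list (rev as) * v * prod_list bs) =
           (if length as = length bs \<and> (\<forall>r < length as. is ! r = js ! r)
            then (\<Prod>r < length as. \<tau> (as ! r * bs ! r)) * \<tau>' v else 0))"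

definition cond_free :: "('a::cplx_alg_1 \<Rightarrow> complex) \<Rightarrow> ('a \<Rightarrow> complex) \<Rightarrow> 'a set \<Rightarrow> 'a set \<Rightarrow> bool" where
  "cond_free \<tau> \<phi> A1 A2 \<longleftrightarrow>
    (\<forall>as is. length as = length is \<and> length as > 1 \<and> set is \<subseteq> {1, 2} \<and> alternating is
       \<and> (\<forall>j < length as. as ! j \<in> fam A1 A2 (is ! j) \<and> \<tau> (as ! j) = 0)
       \<longrightarrow> \<tau> (prod_list as) = 0 \<and> \<phi> (prod_list as) = prod_list (map \<phi> as))"

end

theory Submission
  imports Defs
begin

(* Only the instances of type-B freeness with no factors to the left of the ideal element are
   needed: they say that tau'(v b_1 ... b_m) = 0 for v in I_h and a nonempty centered
   alternating word b_1 ... b_m starting outside A_h.  With v = p this kills the centered part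
   of any a in A_2, so phi = tau on A_2.  For a centered alternating word a_1 ... a_n with n >= 2,
   phi(a_1 ... a_n) = 0 (if a_1 is in A_1, absorb it into p a_1 in I_1), while some a_j lies in
   A_2, so phi(a_j) = tau(a_j) = 0 and the product of the phi(a_j) vanishes as well. *)

lemma cscale_zero_left: "(0::complex) *\<^sub>C (x::'a::cplx_alg_1) = 0"
  using cscale_add_left[of 0 0 x] by simp

lemma cscale_minus_one: "(-1::complex) *\<^sub>C (x::'a::cplx_alg_1) = - x"
  using cscale_add_left[of 1 "-1" x]
  by (simp add: cscale_zero_left cscale_one eq_neg_iff_add_eq_0 add.commute)

lemma csubspace_diff:
  assumes "csubspace S" "x \<in> S" "y \<in> S"
  shows "x - y \<in> S"
  using assms cscale_minus_one[of y] unfolding csubspace_def by (metis diff_conv_add_uminus)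

lemma ideal_of_ideal_generated: "ideal_of (ideal_generated S) UNIV"
  unfolding ideal_generated_def ideal_of_def csubspace_def by auto

lemma subset_ideal_generated: "S \<subseteq> ideal_generated S"
  unfolding ideal_generated_def by blast

lemma alternating_Cons:
  "alternating (h # js) \<longleftrightarrow> (js = [] \<or> h \<noteq> hd js) \<and> alternating js"
proof -
  have split_first: "(\<forall>k. P k) \<longleftrightarrow> P 0 \<and> (\<forall>k. P (Suc k))" for P :: "nat \<Rightarrow> bool"
    by (metis not0_implies_Suc)
  show ?thesis
    unfolding alternating_def by (subst split_first) (cases js; auto simp: hd_conv_nth)
qed

lemma alternating_set_eq:
  assumes "alternating idx" "set idx \<subseteq> {i, j}" "1 < length idx"
  shows "set idx = {i, j}"
proof -
  have "idx ! 0 \<noteq> idx ! 1"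
    using assms(1,3) unfolding alternating_def by auto
  moreover from assms(3) have "idx ! 0 \<in> set idx"
    by (intro nth_mem) linarith
  moreover from assms(3) have "idx ! 1 \<in> set idx"
    by (intro nth_mem)
  ultimately show ?thesis
    using assms(2) by blast
qed

lemma free_type_B_ideal_times_word_eq_0:
  assumes "free_type_B \<tau> I \<tau>' A1 I1 A2 I2"
    and "h \<in> {1, 2}" "v \<in> fam I1 I2 h" "bs \<noteq> []"
    and "list_all2 (\<lambda>b j. b \<in> fam A1 A2 j \<and> \<tau> b = 0) bs js" "set js \<subseteq> {1, 2}"
    and "alternating (h # js)"
  shows "\<tau>' (v * prod_list bs) = 0"
proof -
  note type_B = assms(1)[unfolded free_type_B_def, THEN conjunct2, rule_format]
  show ?thesis
    using type_B[where as = "[]" and ?is = "[]" and v = v and h = h and bs = bs and js = js] assms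
    by (auto simp: list_all2_conv_all_nth)
qed

lemma free_type_B_ideal_times_A2:
  assumes "free_type_B \<tau> I \<tau>' A1 I1 A2 I2"
    and "clinear_on UNIV \<tau>" "\<tau> 1 = 1" "unital_subalg A2"
    and "ideal_of I UNIV" "I1 \<subseteq> I" "clinear_on I \<tau>'"
    and "v \<in> I1" "a \<in> A2"
  shows "\<tau>' (v * a) = \<tau> a * \<tau>' v"
proof -
  define a0 where "a0 = a - \<tau> a *\<^sub>C 1"
  have a_split: "a = \<tau> a *\<^sub>C 1 + a0"
    unfolding a0_def by simp
  have "csubspace A2" "\<tau> a *\<^sub>C 1 \<in> A2"
    using assms(4) unfolding unital_subalg_def csubspace_def by auto
  with assms(9) have "a0 \<in> A2"
    unfolding a0_def by (blast intro: csubspace_diff)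
  moreover have "\<tau> a0 = 0"
    using arg_cong[OF a_split, of \<tau>] assms(2,3) unfolding clinear_on_def by simp
  ultimately have "\<tau>' (v * a0) = 0"
    using free_type_B_ideal_times_word_eq_0[OF assms(1), of 1 v "[a0]" "[2]"] assms(8)
    by (simp add: fam_def alternating_def)
  moreover have "\<tau> a *\<^sub>C v \<in> I" "v * a0 \<in> I"
    using assms(5,6,8) unfolding ideal_of_def csubspace_def by auto
  moreover have "v * a = \<tau> a *\<^sub>C v + v * a0"
    by (subst a_split) (simp add: distrib_left mult_cscale_right)
  moreover have "\<tau>' (\<tau> a *\<^sub>C v) = \<tau> a * \<tau>' v"
    using assms(6-8) unfolding clinear_on_def by auto
  ultimately show ?thesis
    using assms(7) unfolding clinear_on_def by simp
qed

lemma free_type_B_ideal_times_alternating_word_eq_0: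
  assumes "free_type_B \<tau> I \<tau>' A1 I1 A2 I2" "ideal_of I1 A1"
    and "v \<in> I1" "1 < length as"
    and "list_all2 (\<lambda>a i. a \<in> fam A1 A2 i \<and> \<tau> a = 0) as idx" "set idx \<subseteq> {1, 2}" "alternating idx"
  shows "\<tau>' (v * prod_list as) = 0"
proof -
  obtain a1 a2 r where as: "as = a1 # a2 # r"
    using assms(4) by (cases as; cases "tl as") auto
  with assms(5) obtain i1 i2 s where idx: "idx = i1 # i2 # s"
    by (auto simp: list_all2_Cons1)
  show ?thesis
  proof (cases "i1 = 1")
    case True
    then have "v * a1 \<in> I1"
      using assms(2,3,5) as idx unfolding ideal_of_def fam_def by simp
    then have "\<tau>' ((v * a1) * prod_list (a2 # r)) = 0"
      using free_type_B_ideal_times_word_eq_0[OF assms(1), of 1 "v * a1" "a2 # r" "i2 # s"]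
        assms(5-7) as idx True by (simp add: fam_def)
    then show ?thesis
      using as by (simp add: mult.assoc)
  next
    case False
    then have "i1 = 2" using assms(6) idx by auto
    then show ?thesis
      using free_type_B_ideal_times_word_eq_0[OF assms(1), of 1 v "as" idx] assms(3-7) as idx
      by (simp add: fam_def alternating_Cons)
  qed
qed

lemma prod_list_map_alternating_word_eq_0:
  fixes f :: "'a::cplx_alg_1 \<Rightarrow> 'b::{semiring_no_zero_divisors, semiring_1}"
  assumes "\<forall>a\<in>A2. \<tau> a = 0 \<longrightarrow> f a = 0"
    and "list_all2 (\<lambda>a i. a \<in> fam A1 A2 i \<and> \<tau> a = 0) as idx" "set idx \<subseteq> {1, 2}"
    and "alternating idx" "1 < length idx"
  shows "prod_list (map f as) = 0"
proof -
  from assms(3-5) have "2 \<in> set idx"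
    using alternating_set_eq[of idx 1 2] by auto
  then obtain k where k: "k < length idx" "idx ! k = 2"
    by (auto simp: in_set_conv_nth)
  with assms(2) have "as ! k \<in> A2" "\<tau> (as ! k) = 0" "k < length as"
    using list_all2_nthD2[OF assms(2) k(1)] list_all2_lengthD[OF assms(2)] by (simp_all add: fam_def)
  with assms(1) have "0 \<in> set (map f as)"
    by (metis length_map nth_map nth_mem)
  then show ?thesis
    by (simp add: prod_list_zero_iff)
qed

theorem proposition2p12:
  fixes A1 A2 I1 I2 :: "'a::cplx_alg_1 set"
    and \<tau> \<tau>' \<phi> :: "'a \<Rightarrow> complex"
    and p :: 'a
  assumes "unital_subalg A1" and "unital_subalg A2"
    and "alg_generated (A1 \<union> A2) = UNIV"
    and "ideal_of I1 A1" and "ideal_of I2 A2"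
    and "clinear_on UNIV \<tau>" and "\<tau> 1 = 1"
    and "ideal_generated (I1 \<union> I2) \<subseteq> {x. \<tau> x = 0}"
    and "clinear_on (ideal_generated (I1 \<union> I2)) \<tau>'"
    and "free_type_B \<tau> (ideal_generated (I1 \<union> I2)) \<tau>' A1 I1 A2 I2"
    and "p \<in> I1" and "\<tau>' p \<noteq> 0"
    and "\<phi> = (\<lambda>a. \<tau>' (p * a) / \<tau>' p)"
  shows "(\<forall>a\<in>A2. \<phi> a = \<tau> a) \<and> cond_free \<tau> \<phi> A1 A2"
proof
  have "I1 \<subseteq> ideal_generated (I1 \<union> I2)"
    using subset_ideal_generated by blast
  with assms show agree: "\<forall>a\<in>A2. \<phi> a = \<tau> a"
    by (simp add: free_type_B_ideal_times_A2 ideal_of_ideal_generated)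
  show "cond_free \<tau> \<phi> A1 A2"
    unfolding cond_free_def
  proof (intro allI impI conjI)
    fix as idx
    assume word: "length as = length idx \<and> length as > 1 \<and> set idx \<subseteq> {1, 2} \<and> alternating idx
      \<and> (\<forall>j < length as. as ! j \<in> fam A1 A2 (idx ! j) \<and> \<tau> (as ! j) = 0)"
    then have centered: "list_all2 (\<lambda>a i. a \<in> fam A1 A2 i \<and> \<tau> a = 0) as idx"
      by (simp add: list_all2_conv_all_nth)
    from assms(10) have "free_wrt \<tau> A1 A2"
      unfolding free_type_B_def by blast
    with word show "\<tau> (prod_list as) = 0"
      unfolding free_wrt_def by (metis less_imp_le_nat)
    from agree have "\<forall>a\<in>A2. \<tau> a = 0 \<longrightarrow> \<phi> a = 0"
      by simp
    then have "prod_list (map \<phi> as) = 0"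
      using word by (intro prod_list_map_alternating_word_eq_0[OF _ centered]) auto
    moreover have "\<phi> (prod_list as) = 0"
      using free_type_B_ideal_times_alternating_word_eq_0[OF assms(10,4,11)] word centered assms(13)
      by simp
    ultimately show "\<phi> (prod_list as) = prod_list (map \<phi> as)"
      by simp
  qed
qed

end
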